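(* Let $\lambda>0$, $d\in\mathbb{N}$, and equip $\mathbb{R}^d$ with $\|x\|_1=\sum_{i=1}^d|x_i|$. Define $Q:\mathbb{R}^d\to\mathbb{R}^d$ by $Q(x_1,\dots,x_d)=(\lambda-x_d,x_1,\dots,x_{d-1})$, $P_C:\mathbb{R}^d\to\mathbb{R}^d$ by $(P_C(x))_i=P_{[0,\lambda]}(x_i)$, where $P_{[0,\lambda]}(t)=\min\{\max\{t,0\},\lambda\}$, and $T=Q\circ P_C$. For $x\in\mathbb{R}^d$, let $\operatorname{prog}(x)=\max\{i\in\{1,\dots,d\}: |x_i|>0\}$ and $\operatorname{prog}(0)=0$. Then for all $x\in\mathbb{R}^d$ with $\operatorname{prog}(x)<d$, $\|x-Tx\|_1\ge\lambda$. *)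

theory Defs
  imports Main Complex_Main
begin

text \<open>Vectors in R^d are represented as functions nat => real, using only the
coordinates 1..d.\<close>

definition norm1 :: "nat \<Rightarrow> (nat \<Rightarrow> real) \<Rightarrow> real" where
  "norm1 d x = (\<Sum>i=1..d. \<bar>x i\<bar>)"

definition proj_interval :: "real \<Rightarrow> real \<Rightarrow> real" where
  "proj_interval lam t = min (max t 0) lam"

definition PC :: "real \<Rightarrow> (nat \<Rightarrow> real) \<Rightarrow> (nat \<Rightarrow> real)" where
  "PC lam x = (\<lambda>i. proj_interval lam (x i))"

definition Qmap :: "nat \<Rightarrow> real \<Rightarrow> (nat \<Rightarrow> real) \<Rightarrow> (nat \<Rightarrow> real)" where
  "Qmap d lam x = (\<lambda>i. if i = 1 then lam - x d else x (i - 1))"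

definition Tmap :: "nat \<Rightarrow> real \<Rightarrow> (nat \<Rightarrow> real) \<Rightarrow> (nat \<Rightarrow> real)" where
  "Tmap d lam = Qmap d lam \<circ> PC lam"

definition prog :: "nat \<Rightarrow> (nat \<Rightarrow> real) \<Rightarrow> nat" where
  "prog d x = (if \<exists>i\<in>{1..d}. \<bar>x i\<bar> > 0 then Max {i\<in>{1..d}. \<bar>x i\<bar> > 0} else 0)"

end

theory Submission
  imports Defs
begin

text \<open>Since \<open>prog x < d\<close> forces \<open>x d = 0\<close>, the clipped coordinates \<open>y i = P(x i)\<close>,
  extended by \<open>y 0 = \<lambda>\<close>, run from \<open>\<lambda>\<close> down to \<open>y d = 0\<close>, while \<open>(T x) i = y (i - 1)\<close>.
  Projection onto \<open>[0, \<lambda>]\<close> does not increase the distance to the point \<open>y (i - 1)\<close> of that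
  interval, so \<open>|x i - (T x) i| \<ge> y (i - 1) - y i\<close>, and the sum of the right-hand sides
  telescopes to \<open>\<lambda>\<close>.\<close>

lemma prog_less_imp_last_eq_0:
  assumes "prog d x < d"
  shows "x d = 0"
proof (rule ccontr)
  assume "x d \<noteq> 0"
  then have "d \<in> {i\<in>{1..d}. \<bar>x i\<bar> > 0}"
    using assms by auto
  then have "prog d x \<ge> d"
    unfolding prog_def by (auto intro: Max_ge)
  with assms show False by simp
qed

lemma proj_interval_bounds:
  assumes "0 \<le> lam"
  shows "0 \<le> proj_interval lam t" "proj_interval lam t \<le> lam"
  using assms by (auto simp: proj_interval_def)

lemma proj_interval_idem:
  assumes "0 \<le> t" "t \<le> lam"
  shows "proj_interval lam t = t"
  using assms by (simp add: proj_interval_def)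

lemma proj_interval_dist_le:
  assumes "0 \<le> a" "a \<le> lam"
  shows "\<bar>proj_interval lam t - a\<bar> \<le> \<bar>t - a\<bar>"
  using assms by (auto simp: proj_interval_def min_def max_def)

lemma Tmap_eq_shifted_proj:
  assumes "x d = 0" "0 \<le> lam" "i \<ge> 1"
  shows "Tmap d lam x i = (if i = 1 then lam else proj_interval lam (x (i - 1)))"
  using assms by (simp add: Tmap_def Qmap_def PC_def proj_interval_idem)

theorem lemma2:
  fixes lam :: real and d :: nat and x :: "nat \<Rightarrow> real"
  assumes "lam > 0"
    and "prog d x < d"
  shows "norm1 d (\<lambda>i. x i - Tmap d lam x i) \<ge> lam"
proof -
  have "d \<ge> 1" and xd: "x d = 0"
    using assms(2) prog_less_imp_last_eq_0 by auto
  define y where "y i = (if i = 0 then lam else proj_interval lam (x i))" for i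
  have y_bounds: "0 \<le> y i" "y i \<le> lam" for i
    using assms(1) proj_interval_bounds by (auto simp: y_def)
  have T_y: "Tmap d lam x i = y (i - 1)" if "i \<ge> 1" for i
    using that xd assms(1) by (simp add: Tmap_eq_shifted_proj y_def)
  have "lam = (\<Sum>i=1..d. y (i - 1) - y i)"
    using sum_telescope''[of 0 d "\<lambda>i. - y i"] \<open>d \<ge> 1\<close> xd assms(1)
    by (simp add: y_def proj_interval_idem)
  also have "\<dots> \<le> (\<Sum>i=1..d. \<bar>x i - Tmap d lam x i\<bar>)"
  proof (rule sum_mono)
    fix i assume "i \<in> {1..d}"
    then have "y (i - 1) - y i \<le> \<bar>proj_interval lam (x i) - y (i - 1)\<bar>"
      by (simp add: y_def)
    also have "\<dots> \<le> \<bar>x i - Tmap d lam x i\<bar>"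
      using proj_interval_dist_le[OF y_bounds] T_y \<open>i \<in> {1..d}\<close> by simp
    finally show "y (i - 1) - y i \<le> \<bar>x i - Tmap d lam x i\<bar>" .
  qed
  finally show ?thesis
    by (simp add: norm1_def)
qed

end
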